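(* Consider the random-feature weak-to-strong setup below, with any activation $\sigma$, any bottom-layer distribution $\mathcal U$, any input distribution $\mathcal D$, any teacher width $M_{TE}$, and any target $f^*$ with $\mathbb E_{x\sim\mathcal D}[f^*(x)^2]=1$. Then for any student stopping time $T\in[0,\infty]$ (and for the student being either of finite width trained by the gradient flow below, or its infinite-width limit), $$\mathcal L_{ST}\ \ge\ \frac{\big(\sqrt{1+3\mathcal L_{TE}}-\sqrt{1-\mathcal L_{TE}}\big)^2}{4}\ \ge\ \frac34\,\mathcal L_{TE}^2 .$$
   Context: Two-layer random-feature networks: $f_{w,u}(x)=\sum_{i=1}^{m}w_i\sigma(\langle u_i,x\rangle)$, $x\in\mathbb R^d$, with bottom weights $u_i\in\mathbb R^d$ drawn i.i.d. from a distribution $\mathcal U$ and then fixed; only $w$ is trained. Population loss $\mathcal L(f)=\mathbb E_{x\sim\mathcal D}[(f(x)-f^*(x))^2]$. Teacher: $M_{TE}$ units, bottom weights $u_{t,i}\sim\mathcal U$, top weights $w_t\in\arg\min_{w\in\mathbb R^{M_{TE}}}\mathbb E_{x\sim\mathcal D}[(f_{w,u_t}(x)-f^*(x))^2]$; $f_{\mathrm{teacher}}=f_{w_t,u_t}$ and $\mathcal L_{TE}=\mathcal L(f_{\mathrm{teacher}})$. Student: $M_{ST}$ units with bottom weights $u_{s,i}\sim\mathcal U$, top weights initialized at $0$ and trained by gradient flow $\frac{d w_{s,i}}{dt}=-\frac{1}{M_{ST}}\frac{\partial}{\partial w_{s,i}}\mathbb E_{x\sim\mathcal D}[(f_{w_s(t),u_s}(x)-f_{\mathrm{teacher}}(x))^2]$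 up to time $T$; $f_{\mathrm{student}}=f_{w_s(T),u_s}$. The infinite-width student is $f_{\mathrm{student}}=\sum_k(1-e^{-\lambda_kT})\langle f_{\mathrm{teacher}},e_k\rangle_{\mathcal D}e_k$, where $\mathcal K(x,x')=\mathbb E_{u\sim\mathcal U}[\sigma(\langle u,x\rangle)\sigma(\langle u,x'\rangle)]=\sum_k\lambda_ke_k(x)e_k(x')$ with $\langle e_i,e_j\rangle_{\mathcal D}=\delta_{ij}$ and $\langle f,g\rangle_{\mathcal D}=\mathbb E_{x\sim\mathcal D}[f(x)g(x)]$. $\mathcal L_{ST}=\mathcal L(f_{\mathrm{student}})$. *)

theory Defs
  imports "HOL-Probability.Probability"
begin

definition rf_net :: "(real \<Rightarrow> real) \<Rightarrow> nat \<Rightarrow> (nat \<Rightarrow> real) \<Rightarrow> (nat \<Rightarrow> 'a::real_inner) \<Rightarrow> 'a \<Rightarrow> real" where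
  "rf_net \<sigma> m w u x = (\<Sum>i<m. w i * \<sigma> (inner (u i) x))"

definition pop_risk :: "'a measure \<Rightarrow> ('a \<Rightarrow> real) \<Rightarrow> ('a \<Rightarrow> real) \<Rightarrow> real" where
  "pop_risk D f g = (\<integral>x. (f x - g x)^2 \<partial>D)"

definition L2ip :: "'a measure \<Rightarrow> ('a \<Rightarrow> real) \<Rightarrow> ('a \<Rightarrow> real) \<Rightarrow> real" where
  "L2ip D f g = (\<integral>x. f x * g x \<partial>D)"

definition sq_integrable :: "'a measure \<Rightarrow> ('a \<Rightarrow> real) \<Rightarrow> bool" where
  "sq_integrable D f \<longleftrightarrow> f \<in> borel_measurable D \<and> integrable D (\<lambda>x. (f x)^2)"

definition rf_kernel :: "'a::real_inner measure \<Rightarrow> (real \<Rightarrow> real) \<Rightarrow> 'a \<Rightarrow> 'a \<Rightarrow> real" where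
  "rf_kernel U \<sigma> x x' = (\<integral>u. \<sigma> (inner u x) * \<sigma> (inner u x') \<partial>U)"

definition is_teacher :: "'a::real_inner measure \<Rightarrow> (real \<Rightarrow> real) \<Rightarrow> nat \<Rightarrow> (nat \<Rightarrow> 'a) \<Rightarrow> ('a \<Rightarrow> real) \<Rightarrow> (nat \<Rightarrow> real) \<Rightarrow> bool" where
  "is_teacher D \<sigma> m u fstar w \<longleftrightarrow>
     (\<forall>w'. pop_risk D (rf_net \<sigma> m w u) fstar \<le> pop_risk D (rf_net \<sigma> m w' u) fstar)"

definition grad_flow_student :: "'a::real_inner measure \<Rightarrow> (real \<Rightarrow> real) \<Rightarrow> nat \<Rightarrow> (nat \<Rightarrow> 'a)
    \<Rightarrow> ('a \<Rightarrow> real) \<Rightarrow> ereal \<Rightarrow> ('a \<Rightarrow> real) \<Rightarrow> bool" where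
  "grad_flow_student D \<sigma> m u ft T s \<longleftrightarrow>
     (\<exists>ws :: real \<Rightarrow> nat \<Rightarrow> real. \<exists>wT :: nat \<Rightarrow> real.
        (\<forall>i<m. ws 0 i = 0) \<and>
        (\<forall>t. 0 \<le> t \<and> ereal t \<le> T \<longrightarrow>
           (\<forall>i<m. ((\<lambda>\<tau>. ws \<tau> i) has_real_derivative
                     (- (1 / real m) * deriv (\<lambda>c. pop_risk D (rf_net \<sigma> m ((ws t)(i := c)) u) ft) (ws t i)))
                   (at t within {\<tau>. 0 \<le> \<tau> \<and> ereal \<tau> \<le> T}))) \<and>
        (T \<noteq> \<infinity> \<longrightarrow> (\<forall>i<m. wT i = ws (real_of_ereal T) i)) \<and>
        (T = \<infinity> \<longrightarrow> (\<forall>i<m. ((\<lambda>t. ws t i) \<longlongrightarrow> wT i) at_top)) \<and>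
        s = rf_net \<sigma> m wT u)"

definition kernel_eigdecomp :: "'a measure \<Rightarrow> ('a \<Rightarrow> 'a \<Rightarrow> real) \<Rightarrow> (nat \<Rightarrow> real) \<Rightarrow> (nat \<Rightarrow> 'a \<Rightarrow> real) \<Rightarrow> nat set \<Rightarrow> bool" where
  "kernel_eigdecomp D K lam e I \<longleftrightarrow>
     (\<forall>k\<in>I. 0 \<le> lam k \<and> sq_integrable D (e k)) \<and>
     (\<forall>j\<in>I. \<forall>k\<in>I. L2ip D (e j) (e k) = (if j = k then 1 else 0)) \<and>
     (AE x in D. AE x' in D. ((\<lambda>k. lam k * e k x * e k x') has_sum K x x') I)"

text \<open>The factor 1 - exp(-lam T), with T = \<infinity> read as the limit t \<rightarrow> \<infinity>.\<close>
definition flow_factor :: "real \<Rightarrow> ereal \<Rightarrow> real" where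
  "flow_factor l T = (if T = \<infinity> then (if 0 < l then 1 else 0) else 1 - exp (- l * real_of_ereal T))"

text \<open>Infinite-width student: sum_k (1 - exp(-lam_k T)) <f_teacher, e_k>_D e_k, the series
  converging (unconditionally) in L2(D).\<close>
definition inf_width_student :: "'a measure \<Rightarrow> (nat \<Rightarrow> real) \<Rightarrow> (nat \<Rightarrow> 'a \<Rightarrow> real) \<Rightarrow> nat set
    \<Rightarrow> ('a \<Rightarrow> real) \<Rightarrow> ereal \<Rightarrow> ('a \<Rightarrow> real) \<Rightarrow> bool" where
  "inf_width_student D lam e I ft T s \<longleftrightarrow>
     sq_integrable D s \<and>
     ((\<lambda>F. pop_risk D s (\<lambda>x. \<Sum>k\<in>F. flow_factor (lam k) T * L2ip D ft (e k) * e k x))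
        \<longlongrightarrow> 0) (finite_subsets_at_top I)"

end

theory Submission
  imports Defs
begin

(* Both kinds of student f satisfy <f, f> <= <f, f_teacher>, i.e. f lies in the L2 ball with
   centre f_teacher/2 and radius |f_teacher|/2. For the infinite-width student every coefficient
   along an eigenfunction is shrunk by a factor in [0,1]. For the gradient flow, the residual
   r = b - G w of the normal equations obeys r' = -c G r with G symmetric, so <r(s), r(u)> equals
   |r((s+u)/2)|^2 >= 0, and <w(t), r(t)> = c * integral of <r(tau), r(t)> over [0,t] is
   nonnegative. Optimality of the teacher along the ray through its own weights gives
   <f_teacher, f*> = |f_teacher|^2, hence L_TE = 1 - |f_teacher|^2 and f* lies at distance
   sqrt(1 + 3 L_TE)/2 from the centre of the ball; the reverse triangle inequality concludes. *)

lemma integrable_mult_of_sq_integrable: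
  assumes "sq_integrable D f" "sq_integrable D g"
  shows "integrable D (\<lambda>x. f x * g x)"
proof (rule Bochner_Integration.integrable_bound)
  show "integrable D (\<lambda>x. (f x)^2 + (g x)^2)" using assms unfolding sq_integrable_def by auto
  show "(\<lambda>x. f x * g x) \<in> borel_measurable D" using assms unfolding sq_integrable_def by auto
  have "\<bar>f x * g x\<bar> \<le> (f x)^2 + (g x)^2" for x
  proof -
    have "\<bar>f x * g x\<bar> \<le> 2 * \<bar>f x\<bar> * \<bar>g x\<bar>" by (simp add: abs_mult)
    also have "\<dots> \<le> (f x)^2 + (g x)^2" using sum_squares_bound[of "\<bar>f x\<bar>" "\<bar>g x\<bar>"] by simp
    finally show ?thesis .
  qed
  then show "AE x in D. norm (f x * g x) \<le> norm ((f x)^2 + (g x)^2)"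
    by (intro AE_I2) simp
qed

lemma sq_integrable_add [simp, intro]:
  assumes "sq_integrable D f" "sq_integrable D g"
  shows "sq_integrable D (\<lambda>x. f x + g x)"
proof -
  have "(\<lambda>x. (f x + g x)^2) = (\<lambda>x. f x * f x + 2 * (f x * g x) + g x * g x)"
    by (simp add: power2_eq_square algebra_simps)
  then show ?thesis
    using assms integrable_mult_of_sq_integrable[OF assms(1,1)]
      integrable_mult_of_sq_integrable[OF assms] integrable_mult_of_sq_integrable[OF assms(2,2)]
    unfolding sq_integrable_def by auto
qed

lemma sq_integrable_cmult [simp, intro]: "sq_integrable D f \<Longrightarrow> sq_integrable D (\<lambda>x. c * f x)"
  by (auto simp: sq_integrable_def power_mult_distrib)

lemma sq_integrable_divide [simp, intro]: "sq_integrable D f \<Longrightarrow> sq_integrable D (\<lambda>x. f x / c)"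
  using sq_integrable_cmult[of D f "inverse c"] by (simp add: field_simps)

lemma sq_integrable_diff [simp, intro]:
  "sq_integrable D f \<Longrightarrow> sq_integrable D g \<Longrightarrow> sq_integrable D (\<lambda>x. f x - g x)"
  using sq_integrable_add[of D f "\<lambda>x. (-1) * g x"] sq_integrable_cmult[of D g "-1"] by simp

lemma sq_integrable_sum [simp, intro]:
  "(\<And>i. i \<in> A \<Longrightarrow> sq_integrable D (f i)) \<Longrightarrow> sq_integrable D (\<lambda>x. \<Sum>i\<in>A. f i x)"
proof (induction A rule: infinite_finite_induct)
  case (infinite A)
  then show ?case by (simp add: sq_integrable_def)
next
  case empty
  then show ?case by (simp add: sq_integrable_def)
next
  case (insert a A)
  then show ?case by auto
qed

lemma L2ip_commute: "L2ip D f g = L2ip D g f"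
  unfolding L2ip_def by (simp add: mult.commute)

lemma L2ip_self_nonneg: "0 \<le> L2ip D f f"
  unfolding L2ip_def by (rule integral_nonneg_AE) auto

lemma pop_risk_eq_L2ip: "pop_risk D f g = L2ip D (\<lambda>x. f x - g x) (\<lambda>x. f x - g x)"
  unfolding pop_risk_def L2ip_def by (simp add: power2_eq_square)

lemma L2ip_cmult_left [simp]: "L2ip D (\<lambda>x. c * f x) g = c * L2ip D f g"
  unfolding L2ip_def by (simp add: mult.assoc)

lemma L2ip_cmult_right [simp]: "L2ip D f (\<lambda>x. c * g x) = c * L2ip D f g"
  by (simp add: L2ip_commute[of D f])

lemma L2ip_divide_left [simp]: "L2ip D (\<lambda>x. f x / c) g = L2ip D f g / c"
  using L2ip_cmult_left[of D "inverse c" f g] by (simp add: field_simps)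

lemma L2ip_divide_right [simp]: "L2ip D f (\<lambda>x. g x / c) = L2ip D f g / c"
  by (simp add: L2ip_commute[of D f])

lemma L2ip_add_left:
  assumes "sq_integrable D f" "sq_integrable D g" "sq_integrable D h"
  shows "L2ip D (\<lambda>x. f x + g x) h = L2ip D f h + L2ip D g h"
  using integrable_mult_of_sq_integrable[OF assms(1,3)] integrable_mult_of_sq_integrable[OF assms(2,3)]
  unfolding L2ip_def by (simp add: distrib_right)

lemma L2ip_diff_left:
  assumes "sq_integrable D f" "sq_integrable D g" "sq_integrable D h"
  shows "L2ip D (\<lambda>x. f x - g x) h = L2ip D f h - L2ip D g h"
  using integrable_mult_of_sq_integrable[OF assms(1,3)] integrable_mult_of_sq_integrable[OF assms(2,3)]
  unfolding L2ip_def by (simp add: left_diff_distrib)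

lemma L2ip_add_right:
  "sq_integrable D f \<Longrightarrow> sq_integrable D g \<Longrightarrow> sq_integrable D h \<Longrightarrow>
    L2ip D h (\<lambda>x. f x + g x) = L2ip D h f + L2ip D h g"
  by (simp add: L2ip_commute[of D h] L2ip_add_left)

lemma L2ip_diff_right:
  "sq_integrable D f \<Longrightarrow> sq_integrable D g \<Longrightarrow> sq_integrable D h \<Longrightarrow>
    L2ip D h (\<lambda>x. f x - g x) = L2ip D h f - L2ip D h g"
  by (simp add: L2ip_commute[of D h] L2ip_diff_left)

lemma L2ip_sum_left:
  assumes "finite A" "\<And>i. i \<in> A \<Longrightarrow> sq_integrable D (f i)" "sq_integrable D h"
  shows "L2ip D (\<lambda>x. \<Sum>i\<in>A. f i x) h = (\<Sum>i\<in>A. L2ip D (f i) h)"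
  using integrable_mult_of_sq_integrable[OF assms(2,3)]
  unfolding L2ip_def sum_distrib_right by (simp add: assms(1))

lemma L2ip_sum_right:
  "finite A \<Longrightarrow> (\<And>i. i \<in> A \<Longrightarrow> sq_integrable D (f i)) \<Longrightarrow> sq_integrable D h \<Longrightarrow>
    L2ip D h (\<lambda>x. \<Sum>i\<in>A. f i x) = (\<Sum>i\<in>A. L2ip D h (f i))"
  using L2ip_sum_left[where A=A and f=f and D=D and h=h] by (simp add: L2ip_commute[of D h])

lemmas L2ip_expand = L2ip_add_left L2ip_add_right L2ip_diff_left L2ip_diff_right

lemma quadratic_nonneg_imp_discriminant:
  fixes a b c :: real
  assumes nonneg: "\<And>t. 0 \<le> a - 2 * t * b + t^2 * c" and "0 \<le> c"
  shows "b^2 \<le> a * c"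
proof (cases "c = 0")
  case True
  have "0 \<le> a - 2 * ((a + 1) / (2 * b)) * b" if "b \<noteq> 0"
    using nonneg[of "(a + 1) / (2 * b)"] True by simp
  then show ?thesis using True by (cases "b = 0") (auto simp: field_simps)
next
  case False
  then have "c > 0" using \<open>0 \<le> c\<close> by simp
  with nonneg[of "b / c"] show ?thesis by (simp add: field_simps power2_eq_square)
qed

lemma L2_cauchy_schwarz:
  assumes "sq_integrable D f" "sq_integrable D g"
  shows "(L2ip D f g)^2 \<le> L2ip D f f * L2ip D g g"
proof (rule quadratic_nonneg_imp_discriminant)
  fix t
  have "L2ip D (\<lambda>x. f x - t * g x) (\<lambda>x. f x - t * g x)
      = L2ip D f f - 2 * t * L2ip D f g + t^2 * L2ip D g g"
    using assms by (simp add: L2ip_expand L2ip_commute[of D g f] power2_eq_square algebra_simps)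
  then show "0 \<le> L2ip D f f - 2 * t * L2ip D f g + t^2 * L2ip D g g"
    by (metis L2ip_self_nonneg)
qed (rule L2ip_self_nonneg)

lemma L2_reverse_triangle:
  assumes "sq_integrable D f" "sq_integrable D g"
  shows "(sqrt (L2ip D g g) - sqrt (L2ip D f f))^2 \<le> pop_risk D f g"
proof -
  define ff fg gg where "ff = L2ip D f f" and "fg = L2ip D f g" and "gg = L2ip D g g"
  have "ff \<ge> 0" "gg \<ge> 0" by (simp_all add: ff_def gg_def L2ip_self_nonneg)
  have "fg^2 \<le> (sqrt ff * sqrt gg)^2"
    using L2_cauchy_schwarz[OF assms] \<open>ff \<ge> 0\<close> \<open>gg \<ge> 0\<close>
    by (simp add: ff_def fg_def gg_def power_mult_distrib)
  then have "\<bar>fg\<bar> \<le> sqrt ff * sqrt gg"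
    using power2_le_imp_le[of "\<bar>fg\<bar>"] \<open>ff \<ge> 0\<close> \<open>gg \<ge> 0\<close> by simp
  then have "fg \<le> sqrt ff * sqrt gg" by simp
  moreover have "pop_risk D f g = ff - 2 * fg + gg"
    using assms by (simp add: pop_risk_eq_L2ip L2ip_expand L2ip_commute[of D g f] ff_def fg_def gg_def)
  ultimately show ?thesis
    using \<open>ff \<ge> 0\<close> \<open>gg \<ge> 0\<close> unfolding ff_def[symmetric] gg_def[symmetric]
    by (simp add: power2_diff mult.commute)
qed

lemma pop_risk_of_orthogonal:
  assumes "sq_integrable D ft" "sq_integrable D fstar"
    and "L2ip D fstar fstar = 1" and "L2ip D ft fstar = L2ip D ft ft"
  shows "pop_risk D ft fstar = 1 - L2ip D ft ft"
  using assms by (simp add: pop_risk_eq_L2ip L2ip_expand L2ip_commute[of D fstar ft])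

lemma pop_risk_lower_bound:
  assumes sq: "sq_integrable D fs" "sq_integrable D ft" "sq_integrable D fstar"
    and unit: "L2ip D fstar fstar = 1"
    and teacher: "L2ip D ft fstar = L2ip D ft ft"
    and student: "L2ip D fs fs \<le> L2ip D fs ft"
  shows "(sqrt (1 + 3 * pop_risk D ft fstar) - sqrt (1 - pop_risk D ft fstar))^2 / 4
    \<le> pop_risk D fs fstar"
proof -
  define L where "L = pop_risk D ft fstar"
  define X Y where "X x = fs x - (1/2) * ft x" and "Y x = fstar x - (1/2) * ft x" for x
  have sqXY: "sq_integrable D X" "sq_integrable D Y"
    using sq by (simp_all add: X_def[abs_def] Y_def[abs_def])
  have "L = 1 - L2ip D ft ft"
    unfolding L_def using sq(2,3) unit teacher by (rule pop_risk_of_orthogonal)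
  have "0 \<le> L" unfolding L_def pop_risk_eq_L2ip by (rule L2ip_self_nonneg)
  have "L2ip D X X = L2ip D fs fs - L2ip D fs ft + L2ip D ft ft / 4"
    using sq by (simp add: X_def[abs_def] L2ip_expand L2ip_commute[of D ft fs], simp add: field_simps)
  then have "L2ip D X X \<le> (1 - L) / 4"
    using student \<open>L = 1 - L2ip D ft ft\<close> by simp
  then have "sqrt (L2ip D X X) \<le> sqrt ((1 - L) / 4)"
    by (rule real_sqrt_le_mono)
  then have X_le: "sqrt (L2ip D X X) \<le> sqrt (1 - L) / 2"
    by (simp add: real_sqrt_divide)
  have Y: "L2ip D Y Y = (1 + 3 * L) / 4"
    using sq unit teacher \<open>L = 1 - L2ip D ft ft\<close>
    by (simp add: Y_def[abs_def] L2ip_expand L2ip_commute[of D ft fstar])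
  have Y_eq: "sqrt (L2ip D Y Y) = sqrt (1 + 3 * L) / 2"
    unfolding Y by (simp add: real_sqrt_divide)
  have "sqrt (1 - L) \<le> sqrt (1 + 3 * L)"
    using \<open>0 \<le> L\<close> by simp
  then have "(sqrt (1 + 3 * L) / 2 - sqrt (1 - L) / 2)^2
      \<le> (sqrt (L2ip D Y Y) - sqrt (L2ip D X X))^2"
    using X_le Y_eq by (intro power_mono) auto
  also have "\<dots> \<le> pop_risk D X Y"
    by (rule L2_reverse_triangle[OF sqXY])
  also have "\<dots> = pop_risk D fs fstar"
    by (simp add: pop_risk_def X_def Y_def)
  finally show ?thesis
    by (simp add: L_def power2_eq_square field_simps)
qed

lemma sqrt_gap_lower_bound:
  fixes L :: real
  assumes "0 \<le> L" "L \<le> 1"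
  shows "3/4 * L^2 \<le> (sqrt (1 + 3 * L) - sqrt (1 - L))^2 / 4"
proof -
  define A B where "A = sqrt (1 + 3 * L)" and "B = sqrt (1 - L)"
  have A2: "A^2 = 1 + 3 * L" and B2: "B^2 = 1 - L"
    using assms by (simp_all add: A_def B_def)
  have "(A - B) * (A + B) = 4 * L"
    using A2 B2 by (simp add: power2_eq_square algebra_simps)
  then have "3 * (4 * L)^2 = (A - B)^2 * (3 * (A + B)^2)"
    by (metis power_mult_distrib mult.left_commute)
  also have "\<dots> \<le> (A - B)^2 * 16"
  proof (rule mult_left_mono)
    show "3 * (A + B)^2 \<le> 16"
      using A2 B2 sum_squares_bound[of "A" "3 * B"] by (simp add: power2_eq_square algebra_simps)
  qed simp
  finally show ?thesis by (simp add: A_def B_def)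
qed

lemma symmetric_linear_flow_corr_nonneg:
  fixes R :: "real \<Rightarrow> nat \<Rightarrow> real" and G :: "nat \<Rightarrow> nat \<Rightarrow> real"
  assumes sym: "\<And>i j. G i j = G j i" and "s \<le> u"
    and der: "\<And>\<tau> i. \<tau> \<in> {s..u} \<Longrightarrow> i < m \<Longrightarrow>
      ((\<lambda>\<tau>. R \<tau> i) has_real_derivative - c * (\<Sum>j<m. G i j * R \<tau> j)) (at \<tau> within {s..u})"
  shows "0 \<le> (\<Sum>i<m. R s i * R u i)"
proof -
  \<comment> \<open>By symmetry of G, P is constant, and its value at the midpoint is a sum of squares.\<close>
  define P where "P \<sigma> = (\<Sum>i<m. R \<sigma> i * R (s + u - \<sigma>) i)" for \<sigma>
  have "(P has_real_derivative 0) (at \<sigma> within {s..u})" if \<sigma>: "\<sigma> \<in> {s..u}" for \<sigma>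
  proof -
    define \<sigma>' where "\<sigma>' = s + u - \<sigma>"
    have \<sigma>': "\<sigma>' \<in> {s..u}" using \<sigma> by (auto simp: \<sigma>'_def)
    have reflect: "(\<lambda>\<sigma>. s + u - \<sigma>) ` {s..u} \<subseteq> {s..u}" by auto
    have "((\<lambda>\<sigma>. R (s + u - \<sigma>) i) has_real_derivative c * (\<Sum>j<m. G i j * R \<sigma>' j))
        (at \<sigma> within {s..u})" if "i < m" for i
    proof -
      have "((\<lambda>\<tau>. R \<tau> i) has_real_derivative - c * (\<Sum>j<m. G i j * R \<sigma>' j))
          (at (s + u - \<sigma>) within (\<lambda>\<sigma>. s + u - \<sigma>) ` {s..u})"
        using DERIV_subset[OF der[OF \<sigma>' that] reflect] by (simp add: \<sigma>'_def)
      moreover have "((\<lambda>\<sigma>. s + u - \<sigma>) has_real_derivative -1) (at \<sigma> within {s..u})"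
        by (auto intro!: derivative_eq_intros)
      ultimately show ?thesis
        using DERIV_image_chain by (fastforce simp: o_def)
    qed
    then have "(P has_real_derivative
        (\<Sum>i<m. - c * (\<Sum>j<m. G i j * R \<sigma> j) * R \<sigma>' i + c * (\<Sum>j<m. G i j * R \<sigma>' j) * R \<sigma> i))
        (at \<sigma> within {s..u})"
      unfolding P_def \<sigma>'_def using der[OF \<sigma>] by (intro DERIV_sum DERIV_mult) auto
    moreover have "(\<Sum>i<m. \<Sum>j<m. G i j * R \<sigma>' j * R \<sigma> i) = (\<Sum>i<m. \<Sum>j<m. G i j * R \<sigma> j * R \<sigma>' i)"
      by (subst sum.swap) (simp add: sym mult_ac)
    moreover have "(\<Sum>i<m. - c * (\<Sum>j<m. G i j * R \<sigma> j) * R \<sigma>' i + c * (\<Sum>j<m. G i j * R \<sigma>' j) * R \<sigma> i)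
        = c * ((\<Sum>i<m. \<Sum>j<m. G i j * R \<sigma>' j * R \<sigma> i) - (\<Sum>i<m. \<Sum>j<m. G i j * R \<sigma> j * R \<sigma>' i))"
      by (simp add: sum_distrib_left sum_distrib_right sum.distrib sum_subtractf sum_negf algebra_simps)
    ultimately show ?thesis by simp
  qed
  then obtain k where "\<forall>\<sigma>\<in>{s..u}. P \<sigma> = k"
    using has_field_derivative_zero_constant[of "{s..u}" P] by auto
  then have "P s = P ((s + u) / 2)" using \<open>s \<le> u\<close> by simp
  then show ?thesis
    by (simp add: P_def field_simps sum_nonneg flip: power2_eq_square)
qed

lemma symmetric_gradient_flow_corr_nonneg:
  fixes w :: "real \<Rightarrow> nat \<Rightarrow> real" and G :: "nat \<Rightarrow> nat \<Rightarrow> real"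
  assumes sym: "\<And>i j. G i j = G j i" and "0 \<le> c" and "0 \<le> t"
    and start: "\<And>i. i < m \<Longrightarrow> w 0 i = 0"
    and der: "\<And>\<tau> i. \<tau> \<in> {0..t} \<Longrightarrow> i < m \<Longrightarrow>
      ((\<lambda>\<tau>. w \<tau> i) has_real_derivative c * (b i - (\<Sum>j<m. G i j * w \<tau> j))) (at \<tau> within {0..t})"
  shows "0 \<le> (\<Sum>i<m. w t i * (b i - (\<Sum>j<m. G i j * w t j)))"
proof -
  define R where "R \<tau> i = b i - (\<Sum>j<m. G i j * w \<tau> j)" for \<tau> i
  have derR: "((\<lambda>\<tau>. R \<tau> i) has_real_derivative - c * (\<Sum>j<m. G i j * R \<tau> j)) (at \<tau> within {0..t})"
    if "\<tau> \<in> {0..t}" for \<tau> i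
  proof -
    have "((\<lambda>\<tau>. b i - (\<Sum>j<m. G i j * w \<tau> j)) has_real_derivative 0 - (\<Sum>j<m. G i j * (c * R \<tau> j)))
        (at \<tau> within {0..t})"
      using der[OF that] by (intro DERIV_diff DERIV_const DERIV_sum DERIV_cmult) (simp add: R_def)
    then show ?thesis by (simp add: R_def[abs_def] sum_distrib_left sum_negf mult.left_commute)
  qed
  define \<psi> where "\<psi> \<tau> = (\<Sum>i<m. w \<tau> i * R t i)" for \<tau>
  have "(\<psi> has_derivative (*) (c * (\<Sum>i<m. R \<tau> i * R t i))) (at \<tau> within {0..t})"
    if "0 \<le> \<tau>" "\<tau> \<le> t" for \<tau>
  proof -
    have "(\<psi> has_real_derivative (\<Sum>i<m. c * R \<tau> i * R t i)) (at \<tau> within {0..t})"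
      unfolding \<psi>_def using der that by (auto intro!: DERIV_sum DERIV_cmult_right simp: R_def)
    then show ?thesis
      by (simp add: has_field_derivative_imp_has_derivative sum_distrib_left mult.assoc)
  qed
  from mvt_very_simple[OF \<open>0 \<le> t\<close> this] obtain \<xi> where "\<xi> \<in> {0..t}"
    and mvt: "\<psi> t - \<psi> 0 = c * (\<Sum>i<m. R \<xi> i * R t i) * t" by auto
  have "0 \<le> (\<Sum>i<m. R \<xi> i * R t i)"
  proof (rule symmetric_linear_flow_corr_nonneg[where G=G and c=c])
    fix \<tau> i assume "\<tau> \<in> {\<xi>..t}" "i < m"
    then show "((\<lambda>\<tau>. R \<tau> i) has_real_derivative - c * (\<Sum>j<m. G i j * R \<tau> j)) (at \<tau> within {\<xi>..t})"
      using \<open>\<xi> \<in> {0..t}\<close> by (intro DERIV_subset[OF derR]) auto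
  qed (use sym \<open>\<xi> \<in> {0..t}\<close> in auto)
  moreover have "\<psi> 0 = 0" using start by (simp add: \<psi>_def)
  ultimately have "0 \<le> \<psi> t" using mvt \<open>0 \<le> c\<close> \<open>0 \<le> t\<close> by simp
  then show ?thesis by (simp add: \<psi>_def R_def)
qed

lemma rf_net_cmult: "rf_net \<sigma> m (\<lambda>i. t * w i) u = (\<lambda>x. t * rf_net \<sigma> m w u x)"
  by (simp add: rf_net_def[abs_def] sum_distrib_left mult.assoc)

lemma rf_net_fun_upd:
  "i < m \<Longrightarrow> rf_net \<sigma> m (w(i := c)) u x = rf_net \<sigma> m w u x + (c - w i) * \<sigma> (inner (u i) x)"
  unfolding rf_net_def by (simp add: sum.remove[of "{..<m}" i] algebra_simps)

lemma sq_integrable_rf_net: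
  "\<forall>i<m. sq_integrable D (\<lambda>x. \<sigma> (inner (u i) x)) \<Longrightarrow> sq_integrable D (rf_net \<sigma> m w u)"
  unfolding rf_net_def[abs_def] by auto

lemma L2ip_rf_net_left:
  assumes features: "\<forall>i<m. sq_integrable D (\<lambda>x. \<sigma> (inner (u i) x))" and "sq_integrable D g"
  shows "L2ip D (rf_net \<sigma> m w u) g = (\<Sum>i<m. w i * L2ip D (\<lambda>x. \<sigma> (inner (u i) x)) g)"
  unfolding rf_net_def[abs_def] using assms by (subst L2ip_sum_left) auto

lemma L2ip_feature_residual:
  assumes features: "\<forall>i<m. sq_integrable D (\<lambda>x. \<sigma> (inner (u i) x))"
    and "sq_integrable D h" and "i < m"
  shows "L2ip D (\<lambda>x. \<sigma> (inner (u i) x)) (\<lambda>x. h x - rf_net \<sigma> m w u x)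
    = L2ip D (\<lambda>x. \<sigma> (inner (u i) x)) h
      - (\<Sum>j<m. L2ip D (\<lambda>x. \<sigma> (inner (u i) x)) (\<lambda>x. \<sigma> (inner (u j) x)) * w j)"
proof -
  have "L2ip D (\<lambda>x. \<sigma> (inner (u i) x)) (rf_net \<sigma> m w u)
      = (\<Sum>j<m. w j * L2ip D (\<lambda>x. \<sigma> (inner (u j) x)) (\<lambda>x. \<sigma> (inner (u i) x)))"
    using assms by (simp add: L2ip_commute[of D _ "rf_net \<sigma> m w u"] L2ip_rf_net_left)
  then show ?thesis
    using assms sq_integrable_rf_net[OF features]
    by (simp add: L2ip_diff_right L2ip_commute mult.commute)
qed

lemma pop_risk_add_scaled:
  assumes "sq_integrable D g" "sq_integrable D h" "sq_integrable D \<phi>"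
  shows "pop_risk D (\<lambda>x. g x + s * \<phi> x) h
    = pop_risk D g h - 2 * s * L2ip D \<phi> (\<lambda>x. h x - g x) + s^2 * L2ip D \<phi> \<phi>"
proof -
  define r where "r x = g x - h x" for x
  have "sq_integrable D r" using assms by (simp add: r_def[abs_def])
  have "pop_risk D (\<lambda>x. g x + s * \<phi> x) h = L2ip D (\<lambda>x. r x + s * \<phi> x) (\<lambda>x. r x + s * \<phi> x)"
    unfolding pop_risk_eq_L2ip r_def by (simp add: algebra_simps)
  also have "\<dots> = L2ip D r r + 2 * s * L2ip D \<phi> r + s^2 * L2ip D \<phi> \<phi>"
    using \<open>sq_integrable D r\<close> assms(3)
    by (simp add: L2ip_add_left L2ip_add_right L2ip_commute[of D r \<phi>] power2_eq_square algebra_simps)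
  also have "L2ip D \<phi> r = - L2ip D \<phi> (\<lambda>x. h x - g x)"
    using assms by (simp add: r_def[abs_def] L2ip_diff_right)
  finally show ?thesis by (simp add: pop_risk_eq_L2ip r_def[abs_def])
qed

lemma deriv_pop_risk_rf_net:
  assumes features: "\<forall>i<m. sq_integrable D (\<lambda>x. \<sigma> (inner (u i) x))"
    and "sq_integrable D h" and "i < m"
  shows "deriv (\<lambda>c. pop_risk D (rf_net \<sigma> m (w(i := c)) u) h) (w i)
    = - 2 * (L2ip D (\<lambda>x. \<sigma> (inner (u i) x)) h
        - (\<Sum>j<m. L2ip D (\<lambda>x. \<sigma> (inner (u i) x)) (\<lambda>x. \<sigma> (inner (u j) x)) * w j))"
proof -
  define g where "g = rf_net \<sigma> m w u"
  define \<phi> where "\<phi> x = \<sigma> (inner (u i) x)" for x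
  have "sq_integrable D \<phi>" using features \<open>i < m\<close> by (simp add: \<phi>_def[abs_def])
  have "pop_risk D (rf_net \<sigma> m (w(i := c)) u) h
      = pop_risk D g h - 2 * (c - w i) * L2ip D \<phi> (\<lambda>x. h x - g x) + (c - w i)^2 * L2ip D \<phi> \<phi>" for c
    using pop_risk_add_scaled[OF _ _ \<open>sq_integrable D \<phi>\<close>, of g h "c - w i"] assms
      sq_integrable_rf_net[OF features]
    by (simp add: rf_net_fun_upd[OF \<open>i < m\<close>, abs_def] g_def \<phi>_def)
  moreover have "((\<lambda>c. pop_risk D g h - 2 * (c - w i) * L2ip D \<phi> (\<lambda>x. h x - g x)
      + (c - w i)^2 * L2ip D \<phi> \<phi>) has_real_derivative - 2 * L2ip D \<phi> (\<lambda>x. h x - g x)) (at (w i))"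
    by (auto intro!: derivative_eq_intros)
  ultimately have "deriv (\<lambda>c. pop_risk D (rf_net \<sigma> m (w(i := c)) u) h) (w i)
      = - 2 * L2ip D \<phi> (\<lambda>x. h x - g x)"
    by (simp add: DERIV_imp_deriv)
  then show ?thesis
    by (simp add: g_def \<phi>_def[abs_def] L2ip_feature_residual[OF assms])
qed

lemma L2ip_rf_net_residual:
  assumes features: "\<forall>i<m. sq_integrable D (\<lambda>x. \<sigma> (inner (u i) x))" and "sq_integrable D h"
  shows "L2ip D (rf_net \<sigma> m w u) (\<lambda>x. h x - rf_net \<sigma> m w u x)
    = (\<Sum>i<m. w i * (L2ip D (\<lambda>x. \<sigma> (inner (u i) x)) h
        - (\<Sum>j<m. L2ip D (\<lambda>x. \<sigma> (inner (u i) x)) (\<lambda>x. \<sigma> (inner (u j) x)) * w j)))"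
  using assms sq_integrable_rf_net[OF features]
  by (simp add: L2ip_rf_net_left L2ip_feature_residual)

lemma L2ip_eq_of_optimal_scaling:
  assumes "sq_integrable D g" "sq_integrable D h"
    and optimal: "\<And>t. pop_risk D g h \<le> pop_risk D (\<lambda>x. t * g x) h"
  shows "L2ip D g h = L2ip D g g"
proof -
  define a c where "a = L2ip D g g" and "c = L2ip D g h"
  have risk: "pop_risk D (\<lambda>x. t * g x) h = t^2 * a - 2 * t * c + L2ip D h h" for t
    using assms(1,2) by (simp add: pop_risk_eq_L2ip L2ip_expand L2ip_commute[of D h g] a_def c_def
        power2_eq_square algebra_simps)
  have "(a - c)^2 \<le> 0 * a"
  proof (rule quadratic_nonneg_imp_discriminant)
    fix s
    show "0 \<le> 0 - 2 * s * (a - c) + s^2 * a"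
      using optimal[of "1 - s"] risk[of "1 - s"] risk[of 1] by (simp add: power2_eq_square algebra_simps)
  qed (simp add: a_def L2ip_self_nonneg)
  then show ?thesis by (simp add: a_def c_def)
qed

lemma is_teacher_L2ip_eq:
  assumes "is_teacher D \<sigma> m u h w"
    and features: "\<forall>i<m. sq_integrable D (\<lambda>x. \<sigma> (inner (u i) x))" and "sq_integrable D h"
  shows "L2ip D (rf_net \<sigma> m w u) h = L2ip D (rf_net \<sigma> m w u) (rf_net \<sigma> m w u)"
proof (rule L2ip_eq_of_optimal_scaling)
  show "pop_risk D (rf_net \<sigma> m w u) h \<le> pop_risk D (\<lambda>x. t * rf_net \<sigma> m w u x) h" for t
    using assms(1) unfolding is_teacher_def rf_net_cmult[symmetric] by blast
qed (use assms(3) sq_integrable_rf_net[OF features] in auto)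

lemma grad_flow_student_self_le_corr:
  assumes features: "\<forall>i<m. sq_integrable D (\<lambda>x. \<sigma> (inner (u i) x))"
    and "sq_integrable D h" and "0 \<le> T" and "grad_flow_student D \<sigma> m u h T fs"
  shows "sq_integrable D fs \<and> L2ip D fs fs \<le> L2ip D fs h"
proof -
  define S where "S = {\<tau>::real. 0 \<le> \<tau> \<and> ereal \<tau> \<le> T}"
  obtain ws wT where start: "\<forall>i<m. ws 0 i = 0"
    and flow: "\<forall>t \<in> S. \<forall>i<m. ((\<lambda>\<tau>. ws \<tau> i) has_real_derivative
       - (1 / real m) * deriv (\<lambda>c. pop_risk D (rf_net \<sigma> m ((ws t)(i := c)) u) h) (ws t i)) (at t within S)"
    and finite_time: "T \<noteq> \<infinity> \<Longrightarrow> \<forall>i<m. wT i = ws (real_of_ereal T) i"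
    and infinite_time: "T = \<infinity> \<Longrightarrow> \<forall>i<m. ((\<lambda>t. ws t i) \<longlongrightarrow> wT i) at_top"
    and fs: "fs = rf_net \<sigma> m wT u"
    using assms(4) unfolding grad_flow_student_def S_def by blast
  define G where "G i j = L2ip D (\<lambda>x. \<sigma> (inner (u i) x)) (\<lambda>x. \<sigma> (inner (u j) x))" for i j
  define b where "b i = L2ip D (\<lambda>x. \<sigma> (inner (u i) x)) h" for i
  define Q where "Q w = (\<Sum>i<m. w i * (b i - (\<Sum>j<m. G i j * w j)))" for w
  have Q_eq: "Q w = L2ip D (rf_net \<sigma> m w u) (\<lambda>x. h x - rf_net \<sigma> m w u x)" for w
    by (simp add: Q_def G_def b_def L2ip_rf_net_residual[OF features \<open>sq_integrable D h\<close>] mult.commute)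
  have Q_nonneg: "0 \<le> Q (ws t)" if "t \<in> S" for t
    unfolding Q_def
  proof (rule symmetric_gradient_flow_corr_nonneg[where c = "2 / real m"])
    fix \<tau> i assume "\<tau> \<in> {0..t}" "i < m"
    then have "\<tau> \<in> S" "{0..t} \<subseteq> S"
      using \<open>t \<in> S\<close> by (auto simp: S_def intro: order_trans[of _ "ereal _"])
    have "- (1 / real m) * deriv (\<lambda>c. pop_risk D (rf_net \<sigma> m ((ws \<tau>)(i := c)) u) h) (ws \<tau> i)
        = 2 / real m * (b i - (\<Sum>j<m. G i j * ws \<tau> j))"
      unfolding deriv_pop_risk_rf_net[OF features \<open>sq_integrable D h\<close> \<open>i < m\<close>]
      by (simp add: G_def b_def diff_divide_distrib mult.commute)
    then show "((\<lambda>\<tau>. ws \<tau> i) has_real_derivative 2 / real m * (b i - (\<Sum>j<m. G i j * ws \<tau> j)))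
        (at \<tau> within {0..t})"
      using DERIV_subset[OF flow[rule_format, OF \<open>\<tau> \<in> S\<close> \<open>i < m\<close>] \<open>{0..t} \<subseteq> S\<close>] by simp
  qed (use start \<open>t \<in> S\<close> in \<open>simp_all add: G_def S_def L2ip_commute\<close>)
  have "0 \<le> Q wT"
  proof (cases "T = \<infinity>")
    case True
    then have "((\<lambda>t. Q (ws t)) \<longlongrightarrow> Q wT) at_top"
      unfolding Q_def using infinite_time by (auto intro!: tendsto_intros)
    moreover have "eventually (\<lambda>t. 0 \<le> Q (ws t)) at_top"
      using eventually_ge_at_top[of "0::real"] by eventually_elim (auto intro: Q_nonneg simp: S_def True)
    ultimately show ?thesis by (rule tendsto_lowerbound) simp
  next
    case False
    then obtain t where "T = ereal t" "0 \<le> t" using \<open>0 \<le> T\<close> by (cases T) auto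
    then have "Q wT = Q (ws t)" using finite_time by (simp add: Q_def)
    then show ?thesis using Q_nonneg \<open>T = ereal t\<close> \<open>0 \<le> t\<close> by (simp add: S_def)
  qed
  then show ?thesis
    using fs Q_eq sq_integrable_rf_net[OF features] \<open>sq_integrable D h\<close>
    by (simp add: L2ip_diff_right)
qed

lemma flow_factor_bounds:
  assumes "0 \<le> l" "0 \<le> T"
  shows "0 \<le> flow_factor l T \<and> flow_factor l T \<le> 1"
proof (cases "T = \<infinity>")
  case False
  then have "0 \<le> real_of_ereal T" using assms(2) by (simp add: real_of_ereal_pos)
  then show ?thesis using False assms(1) by (simp add: flow_factor_def)
qed (simp add: flow_factor_def)

lemma orthonormal_partial_sum_self_le_corr:
  assumes "finite F" and sq: "\<And>k. k \<in> F \<Longrightarrow> sq_integrable D (e k)" "sq_integrable D h"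
    and orthonormal: "\<And>j k. j \<in> F \<Longrightarrow> k \<in> F \<Longrightarrow> L2ip D (e j) (e k) = (if j = k then 1 else 0)"
    and c: "\<And>k. k \<in> F \<Longrightarrow> 0 \<le> c k \<and> c k \<le> 1"
  shows "L2ip D (\<lambda>x. \<Sum>k\<in>F. c k * L2ip D h (e k) * e k x) (\<lambda>x. \<Sum>k\<in>F. c k * L2ip D h (e k) * e k x)
    \<le> L2ip D (\<lambda>x. \<Sum>k\<in>F. c k * L2ip D h (e k) * e k x) h"
proof -
  define \<beta> where "\<beta> k = c k * L2ip D h (e k)" for k
  define s where "s x = (\<Sum>k\<in>F. \<beta> k * e k x)" for x
  have sq_s: "sq_integrable D s" using sq by (simp add: s_def[abs_def])
  have coeff: "L2ip D (e k) s = \<beta> k" if "k \<in> F" for k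
  proof -
    have "L2ip D (e k) s = (\<Sum>j\<in>F. \<beta> j * L2ip D (e k) (e j))"
      using \<open>finite F\<close> sq that by (simp add: s_def[abs_def] L2ip_sum_right)
    also have "\<dots> = \<beta> k"
      using \<open>finite F\<close> that by (simp add: orthonormal if_distrib cong: if_cong)
    finally show ?thesis .
  qed
  have "L2ip D s s = (\<Sum>k\<in>F. \<beta> k * \<beta> k)"
    using \<open>finite F\<close> sq sq_s coeff by (simp add: s_def[of x for x, abs_def] L2ip_sum_left L2ip_commute[of D _ s])
  also have "\<dots> \<le> (\<Sum>k\<in>F. \<beta> k * L2ip D h (e k))"
  proof (rule sum_mono)
    fix k assume "k \<in> F"
    then have "c k * c k * (L2ip D h (e k))^2 \<le> c k * (L2ip D h (e k))^2"
      using c by (simp add: mult_left_le_one_le mult.assoc)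
    then show "\<beta> k * \<beta> k \<le> \<beta> k * L2ip D h (e k)"
      by (simp add: \<beta>_def power2_eq_square mult_ac)
  qed
  also have "\<dots> = L2ip D s h"
    using \<open>finite F\<close> sq by (simp add: s_def[abs_def] L2ip_sum_left L2ip_commute[of D h])
  finally show ?thesis unfolding s_def[abs_def] \<beta>_def .
qed

lemma L2ip_self_le_corr_of_limit:
  assumes "sq_integrable D f" "sq_integrable D h" "F \<noteq> bot"
    and approx: "eventually (\<lambda>n. sq_integrable D (g n) \<and> L2ip D (g n) (g n) \<le> L2ip D (g n) h) F"
    and lim: "((\<lambda>n. pop_risk D f (g n)) \<longlongrightarrow> 0) F"
  shows "L2ip D f f \<le> L2ip D f h"
proof -
  define v where "v x = h x - 2 * f x" for x
  have sq_v: "sq_integrable D v" using assms(1,2) by (simp add: v_def[abs_def])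
  have "((\<lambda>n. - sqrt (pop_risk D f (g n) * L2ip D v v)) \<longlongrightarrow> 0) F"
    using tendsto_minus[OF tendsto_real_sqrt[OF tendsto_mult_left_zero[OF lim]]] by simp
  moreover have "eventually (\<lambda>n. - sqrt (pop_risk D f (g n) * L2ip D v v) \<le> L2ip D f h - L2ip D f f) F"
    using approx
  proof eventually_elim
    case (elim n)
    then have sq_g: "sq_integrable D (g n)" ..
    define d where "d x = f x - g n x" for x
    have sq_d: "sq_integrable D d" using assms(1) sq_g by (simp add: d_def[abs_def])
    have split: "L2ip D f h - L2ip D f f = (L2ip D (g n) h - L2ip D (g n) (g n)) + L2ip D d v + L2ip D d d"
      using assms(1,2) sq_g
      by (simp add: d_def[abs_def] v_def[abs_def] L2ip_expand L2ip_commute[of D "g n" f]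
          L2ip_commute[of D h])
    have "(L2ip D d v)^2 \<le> L2ip D d d * L2ip D v v" by (rule L2_cauchy_schwarz[OF sq_d sq_v])
    then have "\<bar>L2ip D d v\<bar> \<le> sqrt (L2ip D d d * L2ip D v v)"
      using real_sqrt_le_mono by fastforce
    then have "- sqrt (L2ip D d d * L2ip D v v) \<le> L2ip D d v" by linarith
    then show ?case
      using split elim L2ip_self_nonneg[of D d] by (simp add: pop_risk_eq_L2ip d_def[abs_def])
  qed
  ultimately have "0 \<le> L2ip D f h - L2ip D f f"
    by (rule tendsto_upperbound) (simp add: \<open>F \<noteq> bot\<close>)
  then show ?thesis by simp
qed

lemma inf_width_student_self_le_corr:
  assumes "kernel_eigdecomp D K lam e I" "inf_width_student D lam e I h T fs"
    and "sq_integrable D h" "0 \<le> T"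
  shows "sq_integrable D fs \<and> L2ip D fs fs \<le> L2ip D fs h"
proof -
  have sq_fs: "sq_integrable D fs" using assms(2) by (simp add: inf_width_student_def)
  have "eventually (\<lambda>F. finite F \<and> F \<subseteq> I) (finite_subsets_at_top I)"
    by (simp add: eventually_finite_subsets_at_top_weakI)
  then have "eventually (\<lambda>F. sq_integrable D (\<lambda>x. \<Sum>k\<in>F. flow_factor (lam k) T * L2ip D h (e k) * e k x)
      \<and> L2ip D (\<lambda>x. \<Sum>k\<in>F. flow_factor (lam k) T * L2ip D h (e k) * e k x)
          (\<lambda>x. \<Sum>k\<in>F. flow_factor (lam k) T * L2ip D h (e k) * e k x)
        \<le> L2ip D (\<lambda>x. \<Sum>k\<in>F. flow_factor (lam k) T * L2ip D h (e k) * e k x) h)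
      (finite_subsets_at_top I)"
  proof eventually_elim
    case (elim F)
    then show ?case
      using assms(1,3,4) flow_factor_bounds
      by (auto simp: kernel_eigdecomp_def subset_iff intro!: orthonormal_partial_sum_self_le_corr)
  qed
  then have "L2ip D fs fs \<le> L2ip D fs h"
    by (rule L2ip_self_le_corr_of_limit[OF sq_fs \<open>sq_integrable D h\<close> finite_subsets_at_top_neq_bot])
      (use assms(2) in \<open>simp add: inf_width_student_def\<close>)
  with sq_fs show ?thesis ..
qed

theorem corollary4p4:
  fixes D U :: "'a::euclidean_space measure"
    and \<sigma> :: "real \<Rightarrow> real"
    and fstar fs :: "'a \<Rightarrow> real"
    and Mt Ms :: nat
    and ut us :: "nat \<Rightarrow> 'a"
    and wt :: "nat \<Rightarrow> real"
    and T :: ereal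
  assumes "prob_space D" and "sets D = sets borel"
    and "prob_space U" and "sets U = sets borel"
    and "sq_integrable D fstar" and "(\<integral>x. (fstar x)^2 \<partial>D) = 1"
    and "\<forall>i<Mt. sq_integrable D (\<lambda>x. \<sigma> (inner (ut i) x))"
    and "is_teacher D \<sigma> Mt ut fstar wt"
    and "0 \<le> T"
    and "((\<forall>i<Ms. sq_integrable D (\<lambda>x. \<sigma> (inner (us i) x))) \<and>
          grad_flow_student D \<sigma> Ms us (rf_net \<sigma> Mt wt ut) T fs)
         \<or> (\<exists>lam e I. kernel_eigdecomp D (rf_kernel U \<sigma>) lam e I \<and>
                      inf_width_student D lam e I (rf_net \<sigma> Mt wt ut) T fs)"
  shows "pop_risk D fs fstar \<ge>
           (sqrt (1 + 3 * pop_risk D (rf_net \<sigma> Mt wt ut) fstar)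
            - sqrt (1 - pop_risk D (rf_net \<sigma> Mt wt ut) fstar))^2 / 4
       \<and> (sqrt (1 + 3 * pop_risk D (rf_net \<sigma> Mt wt ut) fstar)
            - sqrt (1 - pop_risk D (rf_net \<sigma> Mt wt ut) fstar))^2 / 4
           \<ge> 3 / 4 * (pop_risk D (rf_net \<sigma> Mt wt ut) fstar)^2"
proof -
  define ft where "ft = rf_net \<sigma> Mt wt ut"
  define L where "L = pop_risk D ft fstar"
  have sq_ft: "sq_integrable D ft"
    unfolding ft_def using assms(7) by (rule sq_integrable_rf_net)
  have unit: "L2ip D fstar fstar = 1"
    using assms(6) by (simp add: L2ip_def power2_eq_square)
  have teacher: "L2ip D ft fstar = L2ip D ft ft"
    unfolding ft_def using assms(8,7,5) by (rule is_teacher_L2ip_eq)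
  have student: "sq_integrable D fs \<and> L2ip D fs fs \<le> L2ip D fs ft"
    using assms(10) grad_flow_student_self_le_corr[OF _ sq_ft assms(9)]
      inf_width_student_self_le_corr[OF _ _ sq_ft assms(9)]
    unfolding ft_def by blast
  have "L = 1 - L2ip D ft ft"
    unfolding L_def using sq_ft assms(5) unit teacher by (rule pop_risk_of_orthogonal)
  moreover have "0 \<le> L" unfolding L_def pop_risk_eq_L2ip by (rule L2ip_self_nonneg)
  ultimately have "L \<le> 1" using L2ip_self_nonneg[of D ft] by linarith
  show ?thesis
    using pop_risk_lower_bound[OF _ sq_ft assms(5) unit teacher] student
      sqrt_gap_lower_bound[OF \<open>0 \<le> L\<close> \<open>L \<le> 1\<close>]
    unfolding L_def ft_def by blast
qed

end
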